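(* Let $T\ge2$ and let $\tau^{*,1}, \tau^{*,2}, \ldots, \tau^{*,T-1}\in[0,\infty)$ be asymptotically optimal for iteration $T$. Then for every $t<T$, $\tau^{*,1}, \ldots, \tau^{*,t-1}$ are asymptotically optimal for iteration $t$.
   Context: Fix $\delta\in(0,1)$, a noise variance $\sigma_\omega^2\ge0$, and a probability distribution $p_\beta$ on $\mathbb{R}$ with finite second moment. Let $B\sim p_\beta$ and $W\sim N(0,1)$ be independent, and let $\eta(a;\tau)=(|a|-\tau)_+\,\mathrm{sign}(a)$ be soft thresholding. The state evolution of approximate message passing (AMP) with thresholds $\tau^1,\tau^2,\ldots\ge0$ is $(\sigma^0)^2=\mathbb{E}[B^2]/\delta$ and $(\sigma^{t+1})^2=\sigma_\omega^2+\frac1\delta\mathbb{E}_{B,W}[(\eta(B+\sigma^tW;\tau^t)-B)^2]$; write $\sigma^T(\tau^1,\ldots,\tau^{T-1})$ for the resulting value at step $T$. (By the AMP state evolution theorem, $\sigma^t$ determines the almost-sure limit of the per-coordinate MSE of the AMP iterates in the asymptotic Gaussian-design setting.) A sequence $\tau^{*,1},\ldots,\tau^{*,T-1}$ is called asymptotically optimal for iteration $T$ if $\sigma^T(\tau^{*,1},\ldots,\tau^{*,T-1})\le\sigma^T(\tau^1,\ldots,\tau^{T-1})$ for all $(\tau^1,\ldots,\tau^{T-1})\in[0,\infty)^{T-1}$. (The paper assumes such minimizers exist, which excludes the case $p_\beta=\delta_0$.) *)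

theory Defs
  imports "HOL-Probability.Probability"
begin

definition soft_thr :: "real \<Rightarrow> real \<Rightarrow> real" where
  "soft_thr a \<tau> = max (\<bar>a\<bar> - \<tau>) 0 * sgn a"

definition std_gauss :: "real measure" where
  "std_gauss = density lborel std_normal_density"

definition se_mse :: "real measure \<Rightarrow> real \<Rightarrow> real \<Rightarrow> real" where
  "se_mse p s \<tau> =
     (\<integral>b. (\<integral>w. (soft_thr (b + s * w) \<tau> - b)\<^sup>2 \<partial>std_gauss) \<partial>p)"

text \<open>State evolution.  se_aux p delta sw2 tau k is sigma^(k+1):
  sigma^1 is the initial value sqrt(E[B^2]/delta) and
  sigma^(t+1) = sqrt(sw2 + (1/delta) E[(eta(B + sigma^t W; tau^t) - B)^2]) for t >= 1,
  so that sigma^T depends exactly on tau^1, ..., tau^(T-1).\<close>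
primrec se_aux :: "real measure \<Rightarrow> real \<Rightarrow> real \<Rightarrow> (nat \<Rightarrow> real) \<Rightarrow> nat \<Rightarrow> real" where
  "se_aux p \<delta> sw2 \<tau> 0 = sqrt ((\<integral>b. b\<^sup>2 \<partial>p) / \<delta>)"
| "se_aux p \<delta> sw2 \<tau> (Suc k) =
     sqrt (sw2 + (1 / \<delta>) * se_mse p (se_aux p \<delta> sw2 \<tau> k) (\<tau> (Suc k)))"

definition se_sigma :: "real measure \<Rightarrow> real \<Rightarrow> real \<Rightarrow> nat \<Rightarrow> (nat \<Rightarrow> real) \<Rightarrow> real" where
  "se_sigma p \<delta> sw2 T \<tau> = se_aux p \<delta> sw2 \<tau> (T - 1)"

definition asymp_optimal :: "real measure \<Rightarrow> real \<Rightarrow> real \<Rightarrow> nat \<Rightarrow> (nat \<Rightarrow> real) \<Rightarrow> bool" where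
  "asymp_optimal p \<delta> sw2 T \<tau> \<longleftrightarrow>
     (\<forall>i\<in>{1..<T}. 0 \<le> \<tau> i) \<and>
     (\<forall>\<tau>'. (\<forall>i\<in>{1..<T}. 0 \<le> \<tau>' i) \<longrightarrow> se_sigma p \<delta> sw2 T \<tau> \<le> se_sigma p \<delta> sw2 T \<tau>')"

end

theory Submission
  imports Defs
begin

text \<open>Lowering the variance of the effective observation can never hurt: if
  \<open>s\<^sub>1 < s\<^sub>2\<close>, rescaling a threshold \<open>t = a s\<^sub>2\<close> to \<open>a s\<^sub>1\<close> strictly decreases the
  soft-thresholding risk, since pointwise the residual
  \<open>\<eta>(b + s w; a s) - b = max (s (w - a)) (min (s (w + a)) (-b))\<close> grows in \<open>|\<cdot>|\<close> with
  \<open>s\<close>, strictly so for large \<open>w\<close>.  Consequently a strict improvement of \<open>\<sigma>\<^sup>t\<close>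
  propagates through every later step of the state evolution.  If a prefix of an
  optimal threshold sequence were not optimal for iteration \<open>t\<close>, replacing it and
  then rescaling the remaining thresholds would beat the optimum at iteration \<open>T\<close>.\<close>

lemma soft_thr_measurable [measurable]:
  assumes "f \<in> borel_measurable M" "g \<in> borel_measurable M"
  shows "(\<lambda>x. soft_thr (f x) (g x)) \<in> borel_measurable M"
proof -
  have "(\<lambda>x. sgn (f x)) \<in> borel_measurable M"
    using measurable_compose[OF assms(1) borel_measurable_sgn] by (simp add: o_def)
  then show ?thesis unfolding soft_thr_def using assms by measurable
qed

lemma abs_soft_thr_le: "0 \<le> t \<Longrightarrow> \<bar>soft_thr x t\<bar> \<le> \<bar>x\<bar>"
  unfolding soft_thr_def by (auto simp: abs_mult sgn_if)

lemma soft_thr_residual_sq_le: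
  assumes "0 \<le> t"
  shows "(soft_thr (b + s * w) t - b)\<^sup>2 \<le> 8 * b\<^sup>2 + 2 * s\<^sup>2 * w\<^sup>2"
proof -
  have "\<bar>soft_thr (b + s * w) t - b\<bar> \<le> 2 * \<bar>b\<bar> + \<bar>s * w\<bar>"
    using abs_soft_thr_le[OF assms, of "b + s * w"] abs_triangle_ineq[of b "s * w"] by linarith
  then have "(soft_thr (b + s * w) t - b)\<^sup>2 \<le> (2 * \<bar>b\<bar> + \<bar>s * w\<bar>)\<^sup>2"
    by (simp add: abs_le_square_iff[symmetric])
  also have "\<dots> \<le> 8 * b\<^sup>2 + 2 * s\<^sup>2 * w\<^sup>2"
    using sum_squares_ge_zero[of "2 * \<bar>b\<bar> - \<bar>s * w\<bar>" 0]
    by (simp add: power2_eq_square algebra_simps)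
  finally show ?thesis .
qed

lemma soft_thr_scaled_residual:
  assumes "0 \<le> s" "0 \<le> a"
  shows "soft_thr (b + s * w) (a * s) - b = max (s * (w - a)) (min (s * (w + a)) (- b))"
proof -
  have "0 \<le> a * s" using assms by simp
  then show ?thesis
    unfolding soft_thr_def by (auto simp: sgn_if max_def min_def algebra_simps)
qed

text \<open>Scaling an interval \<open>[l, u]\<close> by a larger factor moves each endpoint away from
  \<open>0\<close>, so the point of the interval closest to a fixed \<open>c\<close> moves away from \<open>0\<close>.\<close>

lemma clamp_scaled_sq_mono:
  fixes s1 s2 l u c :: real
  assumes "0 \<le> s1" "s1 \<le> s2" "l \<le> u"
  shows "(max (s1 * l) (min (s1 * u) c))\<^sup>2 \<le> (max (s2 * l) (min (s2 * u) c))\<^sup>2"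
proof -
  have away: "0 \<le> s1 * x \<and> s1 * x \<le> s2 * x \<or> s2 * x \<le> s1 * x \<and> s1 * x \<le> 0" for x
    using assms by (cases "0 \<le> x") (auto intro: mult_right_mono mult_right_mono_neg
        simp: mult_nonneg_nonpos)
  have "s1 * l \<le> s1 * u" "s2 * l \<le> s2 * u"
    using assms by (auto intro: mult_left_mono)
  then show ?thesis
    unfolding abs_le_square_iff[symmetric] using away[of l] away[of u] by (smt (verit))
qed

text \<open>The bound on \<open>w\<close> puts both \<open>s\<^sub>1 (w + a)\<close> and \<open>c\<close> below \<open>s\<^sub>2 (w - a)\<close>.\<close>

lemma clamp_scaled_sq_strict_mono:
  fixes s1 s2 a w c :: real
  assumes "0 \<le> s1" "s1 < s2" "0 \<le> a"
    and w: "a * (s1 + s2) / (s2 - s1) + \<bar>c\<bar> / s2 + a < w"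
  shows "(max (s1 * (w - a)) (min (s1 * (w + a)) c))\<^sup>2
       < (max (s2 * (w - a)) (min (s2 * (w + a)) c))\<^sup>2"
proof -
  have s2: "0 < s2" "0 < s2 - s1" using assms by linarith+
  have "0 \<le> a * (s1 + s2) / (s2 - s1)" "0 \<le> \<bar>c\<bar> / s2" using assms s2 by auto
  then have wa: "a * (s1 + s2) / (s2 - s1) < w - a" "\<bar>c\<bar> / s2 < w - a" "0 < w - a"
    using w by linarith+
  have "a * (s1 + s2) < (w - a) * (s2 - s1)"
    using wa(1) s2(2) by (simp add: pos_divide_less_eq)
  moreover have "a * (2 * s1) \<le> a * (s1 + s2)"
    using assms by (intro mult_left_mono) auto
  ultimately have "s1 * (w + a) < s2 * (w - a)"
    by (simp add: algebra_simps)
  moreover have "c < s2 * (w - a)"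
    using wa(2) s2(1) by (simp add: pos_divide_less_eq mult.commute)
  moreover have "0 \<le> s1 * (w - a)" "s1 * (w - a) \<le> s1 * (w + a)"
    using assms wa(3) by (auto intro: mult_left_mono)
  ultimately show ?thesis
    by (intro power_strict_mono) auto
qed

lemma prob_space_std_gauss: "prob_space std_gauss"
  unfolding std_gauss_def by (rule prob_space_normal_density) (rule zero_less_one)

lemma sets_std_gauss [simp, measurable_cong]: "sets std_gauss = sets borel"
  unfolding std_gauss_def by simp

lemma space_std_gauss [simp]: "space std_gauss = UNIV"
  unfolding std_gauss_def by simp

lemma integrable_std_gauss_square: "integrable std_gauss (\<lambda>w. w\<^sup>2)"
  unfolding std_gauss_def
  by (subst integrable_density) (auto simp: integrable_std_normal_moment)

lemma emeasure_std_gauss_interval_neq_0: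
  fixes x y :: real
  assumes "x < y"
  shows "emeasure std_gauss {x<..<y} \<noteq> 0"
proof
  assume "emeasure std_gauss {x<..<y} = 0"
  then have "AE w in std_gauss. w \<notin> {x<..<y}"
    by (subst AE_iff_measurable[where N="{x<..<y}"]) auto
  then have "AE w in lborel. 0 < std_normal_density w \<longrightarrow> w \<notin> {x<..<y}"
    unfolding std_gauss_def by (subst (asm) AE_density) auto
  moreover have "AE w in lborel. 0 < std_normal_density w"
    by (intro AE_I2) (simp add: normal_density_pos)
  ultimately have "AE w in lborel. w \<notin> {x<..<y}"
    by eventually_elim auto
  then have "emeasure lborel {x<..<y} = 0"
    by (subst (asm) AE_iff_measurable[where N="{x<..<y}"]) auto
  then show False using assms by simp
qed

lemma integrable_soft_thr_residual_sq:
  assumes "0 \<le> t"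
  shows "integrable std_gauss (\<lambda>w. (soft_thr (b + s * w) t - b)\<^sup>2)"
proof -
  interpret prob_space std_gauss by (rule prob_space_std_gauss)
  have "integrable std_gauss (\<lambda>w. 8 * b\<^sup>2 + 2 * s\<^sup>2 * w\<^sup>2)"
    using integrable_std_gauss_square by auto
  then show ?thesis
    by (rule Bochner_Integration.integrable_bound)
      (use soft_thr_residual_sq_le[OF assms] in auto)
qed

lemma gauss_risk_scaled_strict_mono:
  assumes "0 \<le> a" "0 \<le> s1" "s1 < s2"
  shows "(\<integral>w. (soft_thr (b + s1 * w) (a * s1) - b)\<^sup>2 \<partial>std_gauss)
       < (\<integral>w. (soft_thr (b + s2 * w) (a * s2) - b)\<^sup>2 \<partial>std_gauss)"
proof -
  interpret prob_space std_gauss by (rule prob_space_std_gauss)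
  define M where "M = a * (s1 + s2) / (s2 - s1) + \<bar>b\<bar> / s2 + a"
  have residual: "soft_thr (b + s * w) (a * s) - b = max (s * (w - a)) (min (s * (w + a)) (- b))"
    if "s \<in> {s1, s2}" for s w
    using assms that by (intro soft_thr_scaled_residual) auto
  show ?thesis
  proof (rule integral_less_AE[where A="{M<..<M+1}"])
    show "integrable std_gauss (\<lambda>w. (soft_thr (b + s1 * w) (a * s1) - b)\<^sup>2)"
      "integrable std_gauss (\<lambda>w. (soft_thr (b + s2 * w) (a * s2) - b)\<^sup>2)"
      using assms by (auto intro!: integrable_soft_thr_residual_sq)
    show "emeasure std_gauss {M<..<M+1} \<noteq> 0"
      by (rule emeasure_std_gauss_interval_neq_0) simp
    show "{M<..<M+1} \<in> sets std_gauss" by simp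
    show "AE w in std_gauss. w \<in> {M<..<M+1} \<longrightarrow>
        (soft_thr (b + s1 * w) (a * s1) - b)\<^sup>2 \<noteq> (soft_thr (b + s2 * w) (a * s2) - b)\<^sup>2"
    proof (intro AE_I2 impI)
      fix w assume "w \<in> {M<..<M+1}"
      then have "(soft_thr (b + s1 * w) (a * s1) - b)\<^sup>2 < (soft_thr (b + s2 * w) (a * s2) - b)\<^sup>2"
        using assms clamp_scaled_sq_strict_mono[of s1 s2 a "- b" w] by (simp add: residual M_def)
      then show "(soft_thr (b + s1 * w) (a * s1) - b)\<^sup>2 \<noteq> (soft_thr (b + s2 * w) (a * s2) - b)\<^sup>2"
        by simp
    qed
    show "AE w in std_gauss.
        (soft_thr (b + s1 * w) (a * s1) - b)\<^sup>2 \<le> (soft_thr (b + s2 * w) (a * s2) - b)\<^sup>2"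
      using assms clamp_scaled_sq_mono[of s1 s2] by (intro AE_I2) (auto simp: residual)
  qed
qed

lemma borel_measurable_gauss_risk:
  assumes "sets p = sets borel"
  shows "(\<lambda>b. \<integral>w. (soft_thr (b + s * w) t - b)\<^sup>2 \<partial>std_gauss) \<in> borel_measurable p"
proof -
  interpret sg: prob_space std_gauss by (rule prob_space_std_gauss)
  have "(\<lambda>(b, w). (soft_thr (b + s * w) t - b)\<^sup>2) \<in> borel_measurable (borel \<Otimes>\<^sub>M borel)"
    by measurable
  moreover have "sets (p \<Otimes>\<^sub>M std_gauss) = sets (borel \<Otimes>\<^sub>M borel)"
    by (rule sets_pair_measure_cong[OF assms sets_std_gauss])
  ultimately have "(\<lambda>(b, w). (soft_thr (b + s * w) t - b)\<^sup>2) \<in> borel_measurable (p \<Otimes>\<^sub>M std_gauss)"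
    using measurable_cong_sets[OF _ refl] by blast
  then show ?thesis
    by (rule sg.borel_measurable_lebesgue_integral)
qed

lemma integrable_gauss_risk:
  assumes "prob_space p" "sets p = sets borel" "integrable p (\<lambda>b. b\<^sup>2)" "0 \<le> t"
  shows "integrable p (\<lambda>b. \<integral>w. (soft_thr (b + s * w) t - b)\<^sup>2 \<partial>std_gauss)"
proof -
  interpret sg: prob_space std_gauss by (rule prob_space_std_gauss)
  define C where "C = (\<integral>w. w\<^sup>2 \<partial>std_gauss)"
  have bound: "norm (\<integral>w. (soft_thr (b + s * w) t - b)\<^sup>2 \<partial>std_gauss) \<le> norm (8 * b\<^sup>2 + 2 * s\<^sup>2 * C)"
    for b
  proof -
    have "(\<integral>w. (soft_thr (b + s * w) t - b)\<^sup>2 \<partial>std_gauss) \<le> (\<integral>w. 8 * b\<^sup>2 + 2 * s\<^sup>2 * w\<^sup>2 \<partial>std_gauss)"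
      using integrable_std_gauss_square assms(4)
      by (intro integral_mono integrable_soft_thr_residual_sq soft_thr_residual_sq_le) auto
    also have "\<dots> = 8 * b\<^sup>2 + 2 * s\<^sup>2 * C"
      unfolding C_def using integrable_std_gauss_square sg.prob_space
      by (subst Bochner_Integration.integral_add) auto
    finally show ?thesis
      by (smt (verit) integral_nonneg_AE AE_I2 zero_le_power2 real_norm_def)
  qed
  have "integrable p (\<lambda>b. 8 * b\<^sup>2 + 2 * s\<^sup>2 * C)"
    using assms(1,3) by (simp add: prob_space.finite_measure finite_measure.integrable_const)
  then show ?thesis
    by (rule Bochner_Integration.integrable_bound)
      (rule borel_measurable_gauss_risk[OF assms(2)], rule AE_I2[OF bound])
qed

lemma se_mse_scaled_strict_mono:
  assumes "prob_space p" "sets p = sets borel" "integrable p (\<lambda>b. b\<^sup>2)"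
    and "0 \<le> a" "0 \<le> s1" "s1 < s2"
  shows "se_mse p s1 (a * s1) < se_mse p s2 (a * s2)"
proof -
  interpret prob_space p by (rule assms(1))
  show ?thesis
    unfolding se_mse_def
  proof (rule integral_less_AE_space)
    show "integrable p (\<lambda>b. \<integral>w. (soft_thr (b + s1 * w) (a * s1) - b)\<^sup>2 \<partial>std_gauss)"
      "integrable p (\<lambda>b. \<integral>w. (soft_thr (b + s2 * w) (a * s2) - b)\<^sup>2 \<partial>std_gauss)"
      using assms by (auto intro!: integrable_gauss_risk)
    show "AE b in p. (\<integral>w. (soft_thr (b + s1 * w) (a * s1) - b)\<^sup>2 \<partial>std_gauss)
        < (\<integral>w. (soft_thr (b + s2 * w) (a * s2) - b)\<^sup>2 \<partial>std_gauss)"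
      using gauss_risk_scaled_strict_mono[OF assms(4-6)] by (intro AE_I2)
    show "emeasure p (space p) \<noteq> 0"
      by (simp add: emeasure_space_1)
  qed
qed

lemma se_mse_improvable:
  assumes "prob_space p" "sets p = sets borel" "integrable p (\<lambda>b. b\<^sup>2)"
    and "0 \<le> s1" "s1 < s2" "0 \<le> t"
  shows "\<exists>t'\<ge>0. se_mse p s1 t' < se_mse p s2 t"
proof -
  have "0 < s2" using assms by linarith
  then have "t = t / s2 * s2" "0 \<le> t / s2" using assms(6) by simp_all
  then show ?thesis
    using se_mse_scaled_strict_mono[OF assms(1-3) _ assms(4,5), of "t / s2"] assms(4)
    by (metis zero_le_mult_iff)
qed

lemma se_mse_nonneg: "0 \<le> se_mse p s t"
  unfolding se_mse_def by (intro integral_nonneg_AE AE_I2) simp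

lemma se_aux_nonneg: "0 < \<delta> \<Longrightarrow> 0 \<le> sw2 \<Longrightarrow> 0 \<le> se_aux p \<delta> sw2 \<tau> k"
  using se_mse_nonneg[of p] by (cases k) auto

lemma se_aux_cong:
  "(\<And>i. 1 \<le> i \<Longrightarrow> i \<le> k \<Longrightarrow> \<tau> i = \<rho> i) \<Longrightarrow> se_aux p \<delta> sw2 \<tau> k = se_aux p \<delta> sw2 \<rho> k"
  by (induction k) auto

lemma se_aux_Suc_improvable:
  assumes "prob_space p" "sets p = sets borel" "integrable p (\<lambda>b. b\<^sup>2)"
    and "0 < \<delta>" "0 \<le> sw2" "0 \<le> \<tau> (Suc n)"
    and "se_aux p \<delta> sw2 \<rho> n < se_aux p \<delta> sw2 \<tau> n"
  shows "\<exists>t'\<ge>0. se_aux p \<delta> sw2 (\<rho>(Suc n := t')) (Suc n) < se_aux p \<delta> sw2 \<tau> (Suc n)"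
proof -
  obtain t' where t': "0 \<le> t'"
    "se_mse p (se_aux p \<delta> sw2 \<rho> n) t' < se_mse p (se_aux p \<delta> sw2 \<tau> n) (\<tau> (Suc n))"
    using se_mse_improvable[OF assms(1-3) se_aux_nonneg[OF assms(4,5)] assms(7,6)] by blast
  have "se_aux p \<delta> sw2 (\<rho>(Suc n := t')) n = se_aux p \<delta> sw2 \<rho> n"
    by (rule se_aux_cong) simp
  moreover have "sw2 + 1 / \<delta> * se_mse p (se_aux p \<delta> sw2 \<rho> n) t'
      < sw2 + 1 / \<delta> * se_mse p (se_aux p \<delta> sw2 \<tau> n) (\<tau> (Suc n))"
    using t'(2) assms(4) by (simp add: divide_strict_right_mono)
  ultimately show ?thesis
    using t'(1) by (intro exI[of _ t']) simp
qed

lemma se_aux_strict_gap_persists: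
  assumes "prob_space p" "sets p = sets borel" "integrable p (\<lambda>b. b\<^sup>2)"
    and "0 < \<delta>" "0 \<le> sw2"
    and "k \<le> j" "\<forall>i\<in>{k<..j}. 0 \<le> \<tau> i" "\<forall>i\<in>{1..k}. 0 \<le> \<rho> i"
    and "se_aux p \<delta> sw2 \<rho> k < se_aux p \<delta> sw2 \<tau> k"
  shows "\<exists>\<rho>'. (\<forall>i\<in>{1..j}. 0 \<le> \<rho>' i) \<and> se_aux p \<delta> sw2 \<rho>' j < se_aux p \<delta> sw2 \<tau> j"
  using assms(6,7)
proof (induction j rule: dec_induct)
  case base
  then show ?case using assms(8,9) by blast
next
  case (step n)
  then obtain \<rho>' where \<rho>': "\<forall>i\<in>{1..n}. 0 \<le> \<rho>' i" "se_aux p \<delta> sw2 \<rho>' n < se_aux p \<delta> sw2 \<tau> n"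
    by auto
  have "0 \<le> \<tau> (Suc n)" using step by simp
  then obtain t' where "0 \<le> t'"
    "se_aux p \<delta> sw2 (\<rho>'(Suc n := t')) (Suc n) < se_aux p \<delta> sw2 \<tau> (Suc n)"
    using se_aux_Suc_improvable[OF assms(1-5) _ \<rho>'(2)] by blast
  moreover have "\<forall>i\<in>{1..Suc n}. 0 \<le> (\<rho>'(Suc n := t')) i"
    using \<rho>'(1) \<open>0 \<le> t'\<close> by (auto simp: le_Suc_eq)
  ultimately show ?case by blast
qed

lemma asymp_optimal_prefix:
  assumes "prob_space p" "sets p = sets borel" "integrable p (\<lambda>b. b\<^sup>2)"
    and "0 < \<delta>" "0 \<le> sw2"
    and opt: "asymp_optimal p \<delta> sw2 T \<tau>" and "1 \<le> t" "t \<le> T"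
  shows "asymp_optimal p \<delta> sw2 t \<tau>"
proof -
  have \<tau>: "\<forall>i\<in>{1..<T}. 0 \<le> \<tau> i"
    using opt unfolding asymp_optimal_def by blast
  have "se_aux p \<delta> sw2 \<tau> (t - 1) \<le> se_aux p \<delta> sw2 \<tau>' (t - 1)"
    if \<tau>': "\<forall>i\<in>{1..<t}. 0 \<le> \<tau>' i" for \<tau>'
  proof (rule ccontr)
    assume "\<not> ?thesis"
    then have "se_aux p \<delta> sw2 \<tau>' (t - 1) < se_aux p \<delta> sw2 \<tau> (t - 1)" by simp
    moreover have "\<forall>i\<in>{t - 1<..T - 1}. 0 \<le> \<tau> i" "\<forall>i\<in>{1..t - 1}. 0 \<le> \<tau>' i"
      using \<tau> \<tau>' assms(7,8) by auto
    ultimately obtain \<rho> where \<rho>: "\<forall>i\<in>{1..T - 1}. 0 \<le> \<rho> i"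
      "se_aux p \<delta> sw2 \<rho> (T - 1) < se_aux p \<delta> sw2 \<tau> (T - 1)"
      using se_aux_strict_gap_persists[OF assms(1-5), of "t - 1" "T - 1" \<tau> \<tau>'] assms(8)
      by (meson diff_le_mono)
    have "\<forall>i\<in>{1..<T}. 0 \<le> \<rho> i" using \<rho>(1) by auto
    then have "se_aux p \<delta> sw2 \<tau> (T - 1) \<le> se_aux p \<delta> sw2 \<rho> (T - 1)"
      using opt unfolding asymp_optimal_def se_sigma_def by blast
    with \<rho>(2) show False by simp
  qed
  then show ?thesis
    using \<tau> assms(8) unfolding asymp_optimal_def se_sigma_def by auto
qed

theorem theorem6:
  fixes p :: "real measure" and \<delta> sw2 :: real and T :: nat and \<tau> :: "nat \<Rightarrow> real"
  assumes "prob_space p" and "sets p = sets borel"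
    and "integrable p (\<lambda>b. b\<^sup>2)"
    and "0 < \<delta>" and "\<delta> < 1" and "0 \<le> sw2"
    and "2 \<le> T"
    and "\<forall>i\<in>{1..<T}. 0 \<le> \<tau> i"
    and "asymp_optimal p \<delta> sw2 T \<tau>"
  shows "\<forall>t. 1 \<le> t \<and> t < T \<longrightarrow> asymp_optimal p \<delta> sw2 t \<tau>"
  using asymp_optimal_prefix[OF assms(1-4,6,9)] by (blast intro: less_imp_le)

end
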